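(* Let $G$ be a graph with vertex set $A \cup B \cup C$, where $A, B, C$ are pairwise disjoint, $|A| = 2$, and $|B|, |C| \in \{3, 4\}$. Suppose that the bipartite graph of edges of $G$ between $B$ and $A \cup C$ is a complete bipartite graph between $B$ and $A \cup C$ minus a matching which has at most two edges between $B$ and $C$, and that $G$ has no edges between $A$ and $C$. Then there is a fractional triangle packing $\omega$ in $G$, assigning positive weight only to triangles that intersect exactly two of the sets $A, B, C$, such that $\omega(e) = 1/2$ for every edge $e$ of $G$ with both ends in $A$ or both ends in $C$, and $\omega(e) = 1$ for every edge $e$ of $G$ with both ends in $B$.
   Context: A fractional triangle packing in a graph $G$ is a function $\omega$ from the set of triangles of $G$ to $[0,1]$ such that $\omega(e) := \sum_{T \ni e}\omega(T) \le 1$ for every edge $e$ of $G$, where the sum is over triangles $T$ of $G$ containing $e$. *)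

theory Defs
  imports Complex_Main
begin

definition simple_graph :: "'a set \<Rightarrow> 'a set set \<Rightarrow> bool" where
  "simple_graph V E \<longleftrightarrow> finite V \<and> (\<forall>e\<in>E. e \<subseteq> V \<and> card e = 2)"

definition triangles :: "'a set set \<Rightarrow> 'a set set" where
  "triangles E = {T. card T = 3 \<and> (\<forall>x\<in>T. \<forall>y\<in>T. x \<noteq> y \<longrightarrow> {x, y} \<in> E)}"

definition edge_weight :: "'a set set \<Rightarrow> ('a set \<Rightarrow> real) \<Rightarrow> 'a set \<Rightarrow> real" where
  "edge_weight E \<omega> e = (\<Sum>T\<in>{T\<in>triangles E. e \<subseteq> T}. \<omega> T)"

definition fractional_triangle_packing :: "'a set set \<Rightarrow> ('a set \<Rightarrow> real) \<Rightarrow> bool" where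
  "fractional_triangle_packing E \<omega> \<longleftrightarrow>
     (\<forall>T\<in>triangles E. 0 \<le> \<omega> T \<and> \<omega> T \<le> 1) \<and>
     (\<forall>e\<in>E. edge_weight E \<omega> e \<le> 1)"

end

theory Submission
  imports Defs
begin

text \<open>
  Number the vertices \<open>0, \<dots>, |B| + |C| + 1\<close> so that \<open>A = {0, 1}\<close>, \<open>B = {2, \<dots>, |B| + 1}\<close>
  and \<open>C\<close> is the rest, and so that every edge of \<open>M\<close> belongs to one fixed maximal matching:
  the first \<open>k\<close> vertices of \<open>B\<close> are matched into \<open>A\<close>, the other \<open>|B| - k\<close> into \<open>C\<close>.
  This is possible because at most two vertices of \<open>B\<close> are matched into \<open>A\<close> and at most two
  into \<open>C\<close>. Enlarging \<open>M\<close> only deletes edges between \<open>B\<close> and \<open>A \<union> C\<close>, and a triangle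
  through an edge inside one part that meets exactly two parts has its other two edges between
  \<open>B\<close> and \<open>A \<union> C\<close>. Hence a packing of the graph with the maximal matching removed, supported
  on triangles meeting two parts and avoiding \<open>A\<close>-\<open>C\<close> pairs, has the required loads in \<open>G\<close>.
  For each of the six possible values of \<open>(|B|, |C|, k)\<close> such a packing, with weights in
  multiples of \<open>1/4\<close>, is given explicitly and checked by evaluation.
\<close>

lemma inj_on_extend:
  assumes "finite X" "finite Y" "X0 \<subseteq> X" "inj_on f X0" "f ` X0 \<subseteq> Y" "card X \<le> card Y"
  obtains h where "inj_on h X" "h ` X \<subseteq> Y" "\<And>x. x \<in> X0 \<Longrightarrow> h x = f x"
proof -
  have "finite X0" using assms(1,3) by (rule finite_subset[rotated])
  then have "card (X - X0) \<le> card (Y - f ` X0)"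
    using assms card_mono[OF assms(1,3)] by (simp add: card_Diff_subset card_image)
  then obtain j where j: "j ` (X - X0) \<subseteq> Y - f ` X0" "inj_on j (X - X0)"
    using card_le_inj[of "X - X0" "Y - f ` X0"] assms(1,2) by auto
  define h where "h x = (if x \<in> X0 then f x else j x)" for x
  have "inj_on h X0" "inj_on h (X - X0)"
    using assms(4) j(2) by (auto simp: h_def inj_on_def)
  moreover have "h ` X0 \<inter> h ` (X - X0) = {}"
    using j(1) by (auto simp: h_def)
  moreover have "X0 - (X - X0) = X0" "(X - X0) - X0 = X - X0" by blast+
  ultimately have "inj_on h (X0 \<union> (X - X0))"
    by (subst inj_on_Un) simp
  moreover have "X0 \<union> (X - X0) = X" using assms(3) by blast
  ultimately have "inj_on h X" by simp
  moreover have "h ` X \<subseteq> Y" using assms(5) j(1) by (auto simp: h_def)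
  moreover have "h x = f x" if "x \<in> X0" for x using that by (simp add: h_def)
  ultimately show thesis by (rule that)
qed

lemma exists_separating_subset:
  assumes "finite B" "P \<subseteq> B" "Q \<subseteq> B" "P \<inter> Q = {}"
    and "card P \<le> r" "card Q \<le> s" "card B \<le> r + s"
  obtains B1 where "P \<subseteq> B1" "B1 \<subseteq> B - Q" "card B1 \<le> r" "card (B - B1) \<le> s"
proof -
  define k where "k = max (card P) (card B - s)"
  have "card (B - Q) = card B - card Q"
    using assms(1,3) by (simp add: card_Diff_subset finite_subset)
  moreover have "card P + card Q \<le> card B"
    using assms(1-4) by (metis card_Un_disjoint card_mono finite_subset le_sup_iff)
  ultimately have "card P \<le> k" "k \<le> card (B - Q)" "P \<subseteq> B - Q"
    using assms unfolding k_def by auto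
  then obtain B1 where B1: "P \<subseteq> B1" "B1 \<subseteq> B - Q" "card B1 = k"
    using exists_subset_between[of P k "B - Q"] assms(1) by auto
  moreover have "card (B - B1) = card B - k"
    using B1 assms(1) card_Diff_subset[of B1 B] finite_subset[of B1 B] by auto
  ultimately show thesis
    using that assms(5,7) unfolding k_def by auto
qed

lemma nth_append_three:
  "i < length xs \<Longrightarrow> (xs @ ys @ zs) ! i = xs ! i"
  "length xs \<le> i \<Longrightarrow> i < length xs + length ys \<Longrightarrow> (xs @ ys @ zs) ! i = ys ! (i - length xs)"
  "length xs + length ys \<le> i \<Longrightarrow> (xs @ ys @ zs) ! i = zs ! (i - (length xs + length ys))"
  by (auto simp: nth_append diff_diff_add)

section \<open>Matchings between a part and the rest\<close>

lemma matching_eq: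
  assumes "\<forall>e\<in>M. \<forall>e'\<in>M. e \<noteq> e' \<longrightarrow> e \<inter> e' = {}" "e \<in> M" "e' \<in> M" "z \<in> e" "z \<in> e'"
  shows "e = e'"
proof (rule ccontr)
  assume "e \<noteq> e'"
  then have "e \<inter> e' = {}" using assms(1-3) by blast
  then show False using assms(4,5) by blast
qed

lemma matching_partner:
  assumes matching: "\<forall>e\<in>M. \<forall>e'\<in>M. e \<noteq> e' \<longrightarrow> e \<inter> e' = {}" and disj: "B \<inter> X = {}"
  obtains f where "\<And>b x. b \<in> B \<Longrightarrow> x \<in> X \<Longrightarrow> {b, x} \<in> M \<Longrightarrow> f b = x"
    and "inj_on f {b \<in> B. \<exists>x\<in>X. {b, x} \<in> M}"
proof -
  define f where "f b = (SOME x. x \<in> X \<and> {b, x} \<in> M)" for b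
  have partner: "f b = x" if "b \<in> B" "x \<in> X" "{b, x} \<in> M" for b x
  proof -
    have "f b \<in> X \<and> {b, f b} \<in> M"
      unfolding f_def by (rule someI[of _ x]) (use that in simp)
    then have "{b, f b} = {b, x}" using matching_eq[OF matching, of "{b, f b}" "{b, x}" b] that(3) by simp
    moreover have "b \<noteq> x" using that disj by blast
    ultimately show ?thesis by (auto simp: doubleton_eq_iff)
  qed
  moreover have "inj_on f {b \<in> B. \<exists>x\<in>X. {b, x} \<in> M}"
  proof (rule inj_onI)
    fix b b' assume "b \<in> {b \<in> B. \<exists>x\<in>X. {b, x} \<in> M}" "b' \<in> {b \<in> B. \<exists>x\<in>X. {b, x} \<in> M}"
      and "f b = f b'"
    then obtain x x' where "b \<in> B" "x \<in> X" "{b, x} \<in> M" "b' \<in> B" "x' \<in> X" "{b', x'} \<in> M"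
      by blast
    moreover from this have "x' = x" using partner \<open>f b = f b'\<close> by metis
    ultimately have "{b, x} = {b', x}" using matching_eq[OF matching, of "{b, x}" "{b', x}" x] by simp
    moreover have "b \<noteq> x" using \<open>b \<in> B\<close> \<open>x \<in> X\<close> disj by blast
    ultimately show "b = b'" by (auto simp: doubleton_eq_iff)
  qed
  ultimately show thesis by (rule that)
qed

lemma finite_pairs:
  assumes "finite B" "finite X" "\<forall>e\<in>M. \<exists>b\<in>B. \<exists>x\<in>X. e = {b, x}"
  shows "finite M"
proof (rule finite_subset)
  show "M \<subseteq> Pow (B \<union> X)"
  proof
    fix e assume "e \<in> M"
    then obtain b x where "b \<in> B" "x \<in> X" "e = {b, x}" using assms(3) by blast
    then show "e \<in> Pow (B \<union> X)" by blast
  qed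
qed (use assms(1,2) in simp)

lemma matched_into_disjoint:
  assumes matching: "\<forall>e\<in>M. \<forall>e'\<in>M. e \<noteq> e' \<longrightarrow> e \<inter> e' = {}"
    and "B \<inter> Y = {}" "B \<inter> Z = {}" "Y \<inter> Z = {}"
  shows "{b \<in> B. \<exists>y\<in>Y. {b, y} \<in> M} \<inter> {b \<in> B. \<exists>z\<in>Z. {b, z} \<in> M} = {}"
proof (intro equalityI subsetI)
  fix b assume "b \<in> {b \<in> B. \<exists>y\<in>Y. {b, y} \<in> M} \<inter> {b \<in> B. \<exists>z\<in>Z. {b, z} \<in> M}"
  then obtain y z where "b \<in> B" "y \<in> Y" "z \<in> Z" "{b, y} \<in> M" "{b, z} \<in> M" by blast
  moreover from this have "{b, y} = {b, z}" by (intro matching_eq[OF matching]) auto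
  ultimately show "b \<in> {}" using assms(2-4) by (auto simp: doubleton_eq_iff)
qed simp

lemma card_matched_le_card:
  assumes "finite Y" and matching: "\<forall>e\<in>M. \<forall>e'\<in>M. e \<noteq> e' \<longrightarrow> e \<inter> e' = {}"
    and disj: "B \<inter> Y = {}"
  shows "card {b \<in> B. \<exists>y\<in>Y. {b, y} \<in> M} \<le> card Y"
proof -
  obtain f where partner: "\<And>b y. b \<in> B \<Longrightarrow> y \<in> Y \<Longrightarrow> {b, y} \<in> M \<Longrightarrow> f b = y"
    and inj: "inj_on f {b \<in> B. \<exists>y\<in>Y. {b, y} \<in> M}"
    using matching_partner[OF matching disj] by blast
  have "f ` {b \<in> B. \<exists>y\<in>Y. {b, y} \<in> M} \<subseteq> Y" using partner by blast
  then show ?thesis using card_inj_on_le[OF inj _ assms(1)] by blast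
qed

lemma card_matched_le:
  assumes "finite M" and matching: "\<forall>e\<in>M. \<forall>e'\<in>M. e \<noteq> e' \<longrightarrow> e \<inter> e' = {}"
    and disj: "B \<inter> C = {}"
  shows "card {b \<in> B. \<exists>c\<in>C. {b, c} \<in> M} \<le> card {e \<in> M. e \<inter> C \<noteq> {}}"
proof -
  obtain f where partner: "\<And>b c. b \<in> B \<Longrightarrow> c \<in> C \<Longrightarrow> {b, c} \<in> M \<Longrightarrow> f b = c"
    using matching_partner[OF matching disj] by blast
  have matched: "f b \<in> C \<and> {b, f b} \<in> M" if "b \<in> {b \<in> B. \<exists>c\<in>C. {b, c} \<in> M}" for b
    using that partner by auto
  have "inj_on (\<lambda>b. {b, f b}) {b \<in> B. \<exists>c\<in>C. {b, c} \<in> M}"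
  proof (rule inj_onI)
    fix b b' assume "b \<in> {b \<in> B. \<exists>c\<in>C. {b, c} \<in> M}" "b' \<in> {b \<in> B. \<exists>c\<in>C. {b, c} \<in> M}"
      and "{b, f b} = {b', f b'}"
    moreover from this have "b \<noteq> f b'" using matched disj by blast
    ultimately show "b = b'" by (auto simp: doubleton_eq_iff)
  qed
  moreover have "(\<lambda>b. {b, f b}) ` {b \<in> B. \<exists>c\<in>C. {b, c} \<in> M} \<subseteq> {e \<in> M. e \<inter> C \<noteq> {}}"
    using matched by blast
  ultimately show ?thesis using assms(1) by (intro card_inj_on_le) auto
qed

lemma matching_extends_to_inj_on:
  assumes fin: "finite S" "finite Y" and matching: "\<forall>e\<in>M. \<forall>e'\<in>M. e \<noteq> e' \<longrightarrow> e \<inter> e' = {}"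
    and disj: "S \<inter> Y = {}" and avoids_Z: "\<forall>b\<in>S. \<forall>z\<in>Z. {b, z} \<notin> M"
    and "card S \<le> card Y"
  obtains h where "inj_on h S" "h ` S \<subseteq> Y" "\<forall>b\<in>S. \<forall>x\<in>Y \<union> Z. {b, x} \<in> M \<longrightarrow> x = h b"
proof -
  define D where "D = {b \<in> S. \<exists>y\<in>Y. {b, y} \<in> M}"
  obtain f where partner: "\<And>b y. b \<in> S \<Longrightarrow> y \<in> Y \<Longrightarrow> {b, y} \<in> M \<Longrightarrow> f b = y"
    and "inj_on f D"
    using matching_partner[OF matching disj] unfolding D_def by blast
  moreover have "D \<subseteq> S" "f ` D \<subseteq> Y" using partner unfolding D_def by auto
  ultimately obtain h where h: "inj_on h S" "h ` S \<subseteq> Y" "\<And>b. b \<in> D \<Longrightarrow> h b = f b"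
    using inj_on_extend[OF fin _ _ _ \<open>card S \<le> card Y\<close>] by blast
  have "\<forall>b\<in>S. \<forall>x\<in>Y \<union> Z. {b, x} \<in> M \<longrightarrow> x = h b"
  proof (intro ballI impI)
    fix b x assume b: "b \<in> S" and x: "x \<in> Y \<union> Z" "{b, x} \<in> M"
    then have "x \<in> Y" using avoids_Z by blast
    then have "b \<in> D" using b x unfolding D_def by blast
    then show "x = h b" using h(3) partner[OF b \<open>x \<in> Y\<close> x(2)] by simp
  qed
  then show thesis by (rule that[OF h(1,2)])
qed

lemma matching_split:
  assumes fin: "finite A" "finite B" "finite C"
    and disj: "A \<inter> B = {}" "A \<inter> C = {}" "B \<inter> C = {}"
    and card: "card A = 2" "card B \<le> 4" "2 \<le> card C"
    and pairs: "\<forall>e\<in>M. \<exists>b\<in>B. \<exists>x\<in>A \<union> C. e = {b, x}"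
    and matching: "\<forall>e\<in>M. \<forall>e'\<in>M. e \<noteq> e' \<longrightarrow> e \<inter> e' = {}"
    and few_BC: "card {e\<in>M. e \<inter> C \<noteq> {}} \<le> 2"
  obtains B1 h1 h2 where "B1 \<subseteq> B" "card B \<le> card B1 + 2"
    and "inj_on h1 B1" "h1 ` B1 \<subseteq> A" "inj_on h2 (B - B1)" "h2 ` (B - B1) \<subseteq> C"
    and "\<forall>b\<in>B1. \<forall>x\<in>A \<union> C. {b, x} \<in> M \<longrightarrow> x = h1 b"
    and "\<forall>b\<in>B - B1. \<forall>x\<in>A \<union> C. {b, x} \<in> M \<longrightarrow> x = h2 b"
proof -
  define BA where "BA = {b \<in> B. \<exists>a\<in>A. {b, a} \<in> M}"
  define BC where "BC = {b \<in> B. \<exists>c\<in>C. {b, c} \<in> M}"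
  have "finite M" using finite_pairs[OF _ _ pairs] fin by blast
  have "BA \<inter> BC = {}" using matched_into_disjoint[OF matching] disj unfolding BA_def BC_def by blast
  moreover have "card BA \<le> 2"
    using card_matched_le_card[OF fin(1) matching, of B] disj(1) card(1) unfolding BA_def by auto
  moreover have "card BC \<le> 2"
    using card_matched_le[OF \<open>finite M\<close> matching disj(3)] few_BC unfolding BC_def by linarith
  ultimately obtain B1 where B1: "BA \<subseteq> B1" "B1 \<subseteq> B - BC" "card B1 \<le> 2" "card (B - B1) \<le> 2"
    using exists_separating_subset[of B BA BC 2 2] fin(2) card(2) unfolding BA_def BC_def by auto
  then have "B1 \<subseteq> B" by blast
  then have "finite B1" using fin(2) by (rule finite_subset)
  have "card B \<le> card B1 + 2"
    using B1(4) card_Diff_subset[OF \<open>finite B1\<close> \<open>B1 \<subseteq> B\<close>] card_mono[OF fin(2) \<open>B1 \<subseteq> B\<close>]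
    by linarith
  obtain h1 where h1: "inj_on h1 B1" "h1 ` B1 \<subseteq> A" "\<forall>b\<in>B1. \<forall>x\<in>A \<union> C. {b, x} \<in> M \<longrightarrow> x = h1 b"
  proof (rule matching_extends_to_inj_on[OF \<open>finite B1\<close> fin(1) matching])
    show "B1 \<inter> A = {}" "\<forall>b\<in>B1. \<forall>c\<in>C. {b, c} \<notin> M" "card B1 \<le> card A"
      using \<open>B1 \<subseteq> B\<close> B1(2,3) disj(1) card(1) unfolding BC_def by auto
  qed
  obtain h2 where h2: "inj_on h2 (B - B1)" "h2 ` (B - B1) \<subseteq> C"
    "\<forall>b\<in>B - B1. \<forall>x\<in>C \<union> A. {b, x} \<in> M \<longrightarrow> x = h2 b"
  proof (rule matching_extends_to_inj_on[OF _ fin(3) matching])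
    show "finite (B - B1)" "(B - B1) \<inter> C = {}" "\<forall>b\<in>B - B1. \<forall>a\<in>A. {b, a} \<notin> M"
      "card (B - B1) \<le> card C"
      using fin(2) B1(1,4) disj(3) card(3) unfolding BA_def by auto
  qed
  show thesis
    by (rule that[OF \<open>B1 \<subseteq> B\<close> \<open>card B \<le> card B1 + 2\<close> h1(1,2) h2(1,2) h1(3)])
      (use h2(3) in \<open>simp add: Un_commute\<close>)
qed

lemma sum_sum_list_swap: "(\<Sum>x\<in>A. \<Sum>y\<leftarrow>ys. f x y) = (\<Sum>y\<leftarrow>ys. \<Sum>x\<in>A. f x y)"
  by (induction ys) (simp_all add: sum.distrib)

lemma triangle_edge: "T \<in> triangles E \<Longrightarrow> x \<in> T \<Longrightarrow> y \<in> T \<Longrightarrow> x \<noteq> y \<Longrightarrow> {x, y} \<in> E"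
  unfolding triangles_def by blast

lemma triangleI:
  assumes "x \<noteq> y" "x \<noteq> z" "y \<noteq> z" "{x, y} \<in> E" "{x, z} \<in> E" "{y, z} \<in> E"
  shows "{x, y, z} \<in> triangles E"
  using assms unfolding triangles_def by (auto simp: insert_commute)

lemma triangles_subset_Pow:
  assumes "simple_graph V E"
  shows "triangles E \<subseteq> Pow V"
proof
  fix T assume T: "T \<in> triangles E"
  then obtain a b c where T_eq: "T = {a, b, c}" and "a \<noteq> b" "a \<noteq> c" "b \<noteq> c"
    unfolding triangles_def by (auto simp: card_3_iff)
  then have "{a, b} \<in> E" "{a, c} \<in> E" using T by (auto intro: triangle_edge)
  then show "T \<in> Pow V" using assms T_eq unfolding simple_graph_def by auto
qed

lemma finite_triangles: "simple_graph V E \<Longrightarrow> finite (triangles E)"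
  using triangles_subset_Pow finite_subset unfolding simple_graph_def by (metis finite_Pow_iff)

lemma edge_weight_sum_list:
  assumes "finite (triangles E)"
  shows "edge_weight E (\<lambda>T. \<Sum>x\<leftarrow>xs. if T = X x then w x else 0) e =
    (\<Sum>x\<leftarrow>xs. if X x \<in> triangles E \<and> e \<subseteq> X x then w x else 0)"
proof -
  have fin: "finite {T \<in> triangles E. e \<subseteq> T}" using assms by simp
  show ?thesis
    unfolding edge_weight_def sum_sum_list_swap
    by (rule arg_cong[where f = sum_list], rule map_cong) (auto simp: sum.delta[OF fin])
qed

lemma weight_le_edge_weight:
  assumes "finite (triangles E)" "\<And>T. 0 \<le> \<omega> T" "T \<in> triangles E" "e \<subseteq> T"
  shows "\<omega> T \<le> edge_weight E \<omega> e"
  unfolding edge_weight_def using assms by (intro member_le_sum) auto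

section \<open>Canonical configurations and packing certificates\<close>

definition block :: "nat \<Rightarrow> nat \<Rightarrow> nat" where
  "block n x = (if x < 2 then 0 else if x < n + 2 then 1 else 2)"

lemma block_le: "block n x \<le> 2"
  by (simp add: block_def)

text \<open>Vertex \<open>u\<close> of \<open>B\<close> is matched to \<open>u - 2 \<in> A\<close> if \<open>u < k + 2\<close>, and to \<open>u + n - k \<in> C\<close> otherwise.\<close>

definition canon_matched :: "nat \<Rightarrow> nat \<Rightarrow> nat \<Rightarrow> nat \<Rightarrow> bool" where
  "canon_matched n k u v \<longleftrightarrow>
     (2 \<le> u \<and> u < k + 2 \<and> v + 2 = u) \<or> (k + 2 \<le> u \<and> u < n + 2 \<and> v + k = u + n)"

definition canon_adjacent :: "nat \<Rightarrow> nat \<Rightarrow> nat \<Rightarrow> nat \<Rightarrow> bool" where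
  "canon_adjacent n k u v \<longleftrightarrow>
     \<not> canon_matched n k u v \<and> \<not> canon_matched n k v u \<and>
     \<not> (block n u = 0 \<and> block n v = 2) \<and> \<not> (block n u = 2 \<and> block n v = 0)"

definition canon_triangle :: "nat \<Rightarrow> nat \<Rightarrow> nat \<Rightarrow> nat list \<Rightarrow> bool" where
  "canon_triangle n m k S \<longleftrightarrow>
     length S = 3 \<and> distinct S \<and> (\<forall>x\<in>set S. x < n + m + 2) \<and>
     (\<forall>x\<in>set S. \<forall>y\<in>set S. canon_adjacent n k x y) \<and> card (block n ` set S) = 2"

definition pair_load :: "(nat list \<times> nat) list \<Rightarrow> nat \<Rightarrow> nat \<Rightarrow> nat" where
  "pair_load L u v = (\<Sum>p\<leftarrow>L. if u \<in> set (fst p) \<and> v \<in> set (fst p) then snd p else 0)"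

text \<open>An entry \<open>(S, q)\<close> stands for the triangle \<open>S\<close> with weight \<open>q / 4\<close>, so the loads \<open>1\<close> and \<open>1/2\<close>
  become \<open>4\<close> and \<open>2\<close>.\<close>

definition packing_certificate :: "nat \<Rightarrow> nat \<Rightarrow> nat \<Rightarrow> (nat list \<times> nat) list \<Rightarrow> bool" where
  "packing_certificate n m k L \<longleftrightarrow>
     (\<forall>(S, q)\<in>set L. canon_triangle n m k S) \<and>
     (\<forall>u<n + m + 2. \<forall>v<n + m + 2. u \<noteq> v \<longrightarrow>
        pair_load L u v \<le> 4 \<and>
        (block n u = block n v \<longrightarrow> pair_load L u v = (if block n u = 1 then 4 else 2)))"

definition certificate_4_3_2 :: "(nat list \<times> nat) list" where
  "certificate_4_3_2 =
    [([2,6,7], 1), ([2,6,8], 1), ([2,3,8], 2), ([0,3,5], 1), ([4,7,8], 2), ([1,2,4], 3), ([2,3,7], 2), ([2,5,6], 2), ([4,5,8], 2), ([0,3,4], 3), ([2,5,8], 1), ([3,4,7], 1), ([3,5,6], 2), ([3,6,8], 1), ([3,5,8], 1), ([1,4,5], 1), ([3,6,7], 1), ([1,2,5], 1), ([2,4,7], 1), ([0,1,5], 2), ([0,4,5], 1)]"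

definition certificate_4_4_2 :: "(nat list \<times> nat) list" where
  "certificate_4_4_2 =
    [([2,6,7], 2), ([2,3,8], 1), ([0,3,5], 1), ([2,4,9], 1), ([4,7,8], 2), ([1,2,4], 2), ([2,3,7], 1), ([2,5,6], 1), ([3,7,9], 2), ([0,3,4], 3), ([3,5,9], 1), ([2,5,8], 3), ([4,5,9], 1), ([4,8,9], 2), ([3,4,7], 1), ([3,5,6], 1), ([3,6,8], 2), ([3,5,8], 1), ([1,4,5], 2), ([5,6,9], 2), ([2,4,7], 1), ([2,3,9], 1), ([2,3,6], 1), ([0,1,5], 2), ([0,4,5], 1)]"

definition certificate_3_3_2 :: "(nat list \<times> nat) list" where
  "certificate_3_3_2 =
    [([3,4,7], 1), ([3,5,6], 1), ([2,4,6], 1), ([1,2,4], 2), ([3,4,6], 1), ([2,5,6], 1), ([2,3,5], 1), ([2,4,7], 1), ([2,5,7], 2), ([2,3,7], 1), ([0,1,4], 2), ([4,6,7], 2), ([2,3,6], 2), ([0,3,4], 2)]"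

definition certificate_3_4_2 :: "(nat list \<times> nat) list" where
  "certificate_3_4_2 =
    [([2,4,8], 2), ([4,7,8], 2), ([1,2,4], 2), ([2,3,7], 3), ([2,5,6], 2), ([2,5,7], 1), ([4,6,7], 2), ([3,5,7], 1), ([0,1,4], 2), ([0,3,4], 2), ([3,6,8], 2), ([3,5,8], 2), ([3,4,6], 2), ([2,3,5], 1)]"

definition certificate_3_3_1 :: "(nat list \<times> nat) list" where
  "certificate_3_3_1 =
    [([1,2,3], 1), ([3,4,7], 1), ([2,6,7], 1), ([4,5,7], 2), ([1,3,4], 1), ([3,6,7], 1), ([1,2,4], 3), ([2,3,7], 2), ([2,5,6], 2), ([2,4,7], 1), ([0,1,3], 2), ([2,3,6], 1), ([0,3,4], 2)]"

definition certificate_3_4_1 :: "(nat list \<times> nat) list" where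
  "certificate_3_4_1 =
    [([2,6,7], 1), ([2,4,8], 2), ([4,5,7], 2), ([3,4,8], 1), ([4,7,8], 1), ([1,2,4], 2), ([2,3,7], 1), ([2,5,6], 2), ([0,1,4], 2), ([0,3,4], 2), ([2,5,8], 2), ([1,2,3], 2), ([3,4,7], 1), ([3,6,8], 2), ([3,7,8], 1), ([3,6,7], 1), ([2,3,6], 1)]"

lemma certificates_valid:
  "packing_certificate 4 3 2 certificate_4_3_2" "packing_certificate 4 4 2 certificate_4_4_2"
  "packing_certificate 3 3 2 certificate_3_3_2" "packing_certificate 3 4 2 certificate_3_4_2"
  "packing_certificate 3 3 1 certificate_3_3_1" "packing_certificate 3 4 1 certificate_3_4_1"
  unfolding packing_certificate_def canon_triangle_def canon_adjacent_def canon_matched_def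
    block_def pair_load_def certificate_4_3_2_def certificate_4_4_2_def certificate_3_3_2_def
    certificate_3_4_2_def certificate_3_3_1_def certificate_3_4_1_def
  by (simp_all add: All_less_Suc numeral_eq_Suc)

lemma packing_certificate_exists:
  assumes "n \<in> {3, 4}" "m \<in> {3, 4}" "k \<le> 2" "n \<le> k + 2"
  obtains L where "packing_certificate n m k L"
proof -
  have "k = 1 \<or> k = 2" using assms by auto
  then consider "n = 4" "k = 2" | "n = 3" "k = 2" | "n = 3" "k = 1"
    using assms by fastforce
  then show thesis
    using assms(2) that certificates_valid by cases auto
qed

definition certificate_weight :: "(nat \<Rightarrow> 'a) \<Rightarrow> (nat list \<times> nat) list \<Rightarrow> 'a set \<Rightarrow> real" where
  "certificate_weight g L T = (\<Sum>p\<leftarrow>L. if T = g ` set (fst p) then real (snd p) / 4 else 0)"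

lemma pair_load_real:
  "real (pair_load L u v) / 4 =
    (\<Sum>p\<leftarrow>L. if u \<in> set (fst p) \<and> v \<in> set (fst p) then real (snd p) / 4 else 0)"
  unfolding pair_load_def by (induction L) (auto simp: add_divide_distrib)

locale canonical_labelling =
  fixes A B C :: "'a set" and M :: "'a set set" and n m k :: nat and g :: "nat \<Rightarrow> 'a"
  assumes bij: "bij_betw g {..<n + m + 2} (A \<union> B \<union> C)"
    and in_A_iff: "i < n + m + 2 \<Longrightarrow> g i \<in> A \<longleftrightarrow> block n i = 0"
    and in_B_iff: "i < n + m + 2 \<Longrightarrow> g i \<in> B \<longleftrightarrow> block n i = 1"
    and in_C_iff: "i < n + m + 2 \<Longrightarrow> g i \<in> C \<longleftrightarrow> block n i = 2"
    and matched_canonical: "\<lbrakk>u < n + m + 2; v < n + m + 2; block n u = 1; block n v \<noteq> 1;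
      {g u, g v} \<in> M\<rbrakk> \<Longrightarrow> canon_matched n k u v"

lemma (in canonical_labelling) card_parts_met:
  assumes "I \<subseteq> {..<n + m + 2}"
  shows "card {X \<in> {A, B, C}. g ` I \<inter> X \<noteq> {}} = card (block n ` I)"
proof -
  define part where "part j = (if j = 0 then A else if j = 1 then B else C)" for j :: nat
  have in_part_iff: "g i \<in> part j \<longleftrightarrow> block n i = j" if "i \<in> I" "j \<le> 2" for i j
    using that assms in_A_iff in_B_iff in_C_iff unfolding part_def by auto
  have "{X \<in> {A, B, C}. g ` I \<inter> X \<noteq> {}} = part ` block n ` I"
  proof (intro equalityI subsetI)
    fix X assume "X \<in> {X \<in> {A, B, C}. g ` I \<inter> X \<noteq> {}}"
    then obtain i where i: "i \<in> I" "g i \<in> X" "X \<in> {A, B, C}" by blast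
    then have "i < n + m + 2" using assms by blast
    then have "X = part (block n i)"
      using i in_A_iff in_B_iff in_C_iff unfolding part_def by auto
    then show "X \<in> part ` block n ` I" using i(1) by blast
  next
    fix X assume "X \<in> part ` block n ` I"
    then obtain i where "i \<in> I" "X = part (block n i)" by blast
    then show "X \<in> {X \<in> {A, B, C}. g ` I \<inter> X \<noteq> {}}"
      using in_part_iff[of i "block n i"] block_le[of n i] unfolding part_def by auto
  qed
  moreover have "inj_on part (block n ` I)"
  proof (rule inj_onI)
    fix j j' assume "j \<in> block n ` I" "j' \<in> block n ` I" "part j = part j'"
    then obtain i where "i \<in> I" "j = block n i" "g i \<in> part j'"
      using in_part_iff block_le by blast
    then show "j = j'" using in_part_iff \<open>j' \<in> block n ` I\<close> block_le by auto
  qed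
  ultimately show ?thesis by (simp add: card_image)
qed

lemma canonical_labelling_of_lists:
  fixes xa xb xc :: "'a list"
  defines "xs \<equiv> xa @ xb @ xc"
  assumes dist: "distinct xs" and sets: "set xa = A" "set xb = B" "set xc = C"
    and lens: "length xa = 2" "length xb = n" "length xc = m" and "k \<le> 2" "n \<le> k + m"
    and to_A: "\<And>j x. j < k \<Longrightarrow> x \<in> A \<union> C \<Longrightarrow> {xb ! j, x} \<in> M \<Longrightarrow> x = xa ! j"
    and to_C: "\<And>j x. k \<le> j \<Longrightarrow> j < n \<Longrightarrow> x \<in> A \<union> C \<Longrightarrow> {xb ! j, x} \<in> M \<Longrightarrow> x = xc ! (j - k)"
  shows "canonical_labelling A B C M n m k ((!) xs)"
proof -
  have len: "length xs = n + m + 2" using lens unfolding xs_def by simp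
  have nth_A: "xs ! i = xa ! i" if "i < 2" for i
    using that lens nth_append_three(1)[where xs = xa and ys = xb and zs = xc] unfolding xs_def by simp
  have nth_B: "xs ! i = xb ! (i - 2)" if "2 \<le> i" "i < n + 2" for i
    using that lens nth_append_three(2)[where xs = xa and ys = xb and zs = xc] unfolding xs_def by simp
  have nth_C: "xs ! i = xc ! (i - (n + 2))" if "n + 2 \<le> i" for i
    using that lens nth_append_three(3)[where xs = xa and ys = xb and zs = xc] unfolding xs_def
    by (simp add: add.commute)
  have disj: "A \<inter> B = {}" "A \<inter> C = {}" "B \<inter> C = {}"
    using dist sets unfolding xs_def by auto
  have in_part: "xs ! i \<in> (if i < 2 then A else if i < n + 2 then B else C)" if "i < n + m + 2" for i
    using that nth_A nth_B nth_C sets lens by (auto intro!: nth_mem)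
  have same_index: "v = w" if "xs ! v = xs ! w" "v < n + m + 2" "w < n + m + 2" for v w
    using that dist len by (simp add: nth_eq_iff_index_eq)
  show ?thesis
  proof
    show "bij_betw ((!) xs) {..<n + m + 2} (A \<union> B \<union> C)"
      using dist len sets unfolding xs_def by (intro bij_betw_nth) auto
  next
    fix i assume "i < n + m + 2"
    then show "xs ! i \<in> A \<longleftrightarrow> block n i = 0" "xs ! i \<in> B \<longleftrightarrow> block n i = 1"
      "xs ! i \<in> C \<longleftrightarrow> block n i = 2"
      using in_part[of i] disj unfolding block_def by (auto split: if_splits)
  next
    fix u v assume uv: "u < n + m + 2" "v < n + m + 2" "block n u = 1" "block n v \<noteq> 1"
      and M: "{xs ! u, xs ! v} \<in> M"
    have u: "2 \<le> u" "u < n + 2" and "xs ! v \<in> A \<union> C"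
      using uv in_part[of v] unfolding block_def by (auto split: if_splits)
    with M have M': "{xb ! (u - 2), xs ! v} \<in> M" using nth_B by simp
    show "canon_matched n k u v"
    proof (cases "u - 2 < k")
      case True
      then have "xs ! v = xs ! (u - 2)"
        using to_A[OF True \<open>xs ! v \<in> A \<union> C\<close> M'] nth_A \<open>k \<le> 2\<close> by simp
      then have "v = u - 2" using same_index uv(1,2) by simp
      with u True show ?thesis unfolding canon_matched_def by linarith
    next
      case False
      then have "xs ! v = xs ! (u + n - k)"
        using to_C[of "u - 2"] \<open>xs ! v \<in> A \<union> C\<close> M' u nth_C[of "u + n - k"] by simp
      moreover have "u + n - k < n + m + 2" using u \<open>n \<le> k + m\<close> by linarith
      ultimately have "v = u + n - k" using same_index uv(2) by simp
      with u False show ?thesis unfolding canon_matched_def by linarith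
    qed
  qed
qed

lemma canonical_labelling_of_split:
  assumes fin: "finite A" "finite B" "finite C"
    and disj: "A \<inter> B = {}" "A \<inter> C = {}" "B \<inter> C = {}"
    and card: "card A = 2" "card B = n" "card C = m"
    and "B1 \<subseteq> B" and h1: "inj_on h1 B1" "h1 ` B1 \<subseteq> A" and h2: "inj_on h2 (B - B1)" "h2 ` (B - B1) \<subseteq> C"
    and to_A: "\<forall>b\<in>B1. \<forall>x\<in>A \<union> C. {b, x} \<in> M \<longrightarrow> x = h1 b"
    and to_C: "\<forall>b\<in>B - B1. \<forall>x\<in>A \<union> C. {b, x} \<in> M \<longrightarrow> x = h2 b"
  obtains g where "canonical_labelling A B C M n m (card B1) g"
proof -
  have fin_B1: "finite B1" using \<open>B1 \<subseteq> B\<close> fin(2) by (rule finite_subset)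
  obtain ys1 ys2 ra rc where ys: "set ys1 = B1" "distinct ys1" "set ys2 = B - B1" "distinct ys2"
    and rs: "set ra = A - h1 ` B1" "distinct ra" "set rc = C - h2 ` (B - B1)" "distinct rc"
    using finite_distinct_list fin fin_B1 by (metis finite_Diff)
  define xa where "xa = map h1 ys1 @ ra"
  define xb where "xb = ys1 @ ys2"
  define xc where "xc = map h2 ys2 @ rc"
  have sets: "set xa = A" "set xb = B" "set xc = C"
    using ys rs h1(2) h2(2) \<open>B1 \<subseteq> B\<close> unfolding xa_def xb_def xc_def by auto
  have dist: "distinct xa" "distinct xb" "distinct xc"
    using ys rs h1(1) h2(1) unfolding xa_def xb_def xc_def by (auto simp: distinct_map)
  have lens: "length xa = 2" "length xb = n" "length xc = m"
    using sets dist card by (metis distinct_card)+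
  have len_ys1: "length ys1 = card B1" using ys by (metis distinct_card)
  have "card B1 \<le> card A" "card (B - B1) \<le> card C"
    using card_inj_on_le h1 h2 fin by blast+
  then have bounds: "card B1 \<le> 2" "n \<le> card B1 + m"
    using card card_Diff_subset[OF fin_B1 \<open>B1 \<subseteq> B\<close>] by linarith+
  have "canonical_labelling A B C M n m (card B1) ((!) (xa @ xb @ xc))"
  proof (rule canonical_labelling_of_lists[OF _ sets lens bounds])
    show "distinct (xa @ xb @ xc)" using dist sets disj by auto
  next
    fix j x assume "j < card B1" "x \<in> A \<union> C" "{xb ! j, x} \<in> M"
    then show "x = xa ! j"
      using to_A[rule_format, of "ys1 ! j" x] ys len_ys1 unfolding xa_def xb_def by (auto simp: nth_append)
  next
    fix j x assume "card B1 \<le> j" "j < n" "x \<in> A \<union> C" "{xb ! j, x} \<in> M"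
    moreover have "j - card B1 < length ys2" using lens len_ys1 \<open>j < n\<close> \<open>card B1 \<le> j\<close>
      unfolding xb_def by simp
    ultimately show "x = xc ! (j - card B1)"
      using to_C[rule_format, of "ys2 ! (j - card B1)" x] ys len_ys1 nth_mem unfolding xb_def xc_def
      by (auto simp: nth_append)
  qed
  then show thesis by (rule that)
qed

section \<open>Transferring a certificate to the graph\<close>

locale labelled_graph = canonical_labelling +
  fixes E :: "'a set set"
  assumes graph: "simple_graph (A \<union> B \<union> C) E"
    and bipartite: "\<forall>b\<in>B. \<forall>x\<in>A \<union> C. ({b, x} \<in> E \<longleftrightarrow> {b, x} \<notin> M)"
begin

lemma g_inj: "inj_on g {..<n + m + 2}"
  using bij by (rule bij_betw_imp_inj_on)

lemma edge_labelled:
  assumes "e \<in> E"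
  obtains u v where "u < n + m + 2" "v < n + m + 2" "u \<noteq> v" "e = {g u, g v}"
proof -
  have "e \<subseteq> A \<union> B \<union> C" "card e = 2"
    using assms graph unfolding simple_graph_def by blast+
  obtain x y where xy: "e = {x, y}" "x \<noteq> y"
    using \<open>card e = 2\<close> unfolding card_2_iff by blast
  have "x \<in> g ` {..<n + m + 2}" "y \<in> g ` {..<n + m + 2}"
    using bij_betw_imp_surj_on[OF bij] xy \<open>e \<subseteq> A \<union> B \<union> C\<close> by auto
  then obtain u v where "u < n + m + 2" "v < n + m + 2" "x = g u" "y = g v"
    by blast
  moreover from this have "u \<noteq> v" using xy by blast
  ultimately show thesis using that xy by blast
qed

lemma cross_edge:
  assumes "u < n + m + 2" "v < n + m + 2" "block n u \<noteq> block n v" "canon_adjacent n k u v"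
  shows "{g u, g v} \<in> E"
proof -
  have edge: "{g p, g q} \<in> E"
    if "p < n + m + 2" "q < n + m + 2" "block n p = 1" "block n q \<noteq> 1" "\<not> canon_matched n k p q"
    for p q
  proof -
    have "g p \<in> B" "g q \<in> A \<union> C"
      using that in_A_iff in_B_iff in_C_iff block_le[of n q] by auto
    moreover have "{g p, g q} \<notin> M" using that matched_canonical by blast
    ultimately show ?thesis using bipartite by blast
  qed
  have "block n u = 1 \<or> block n v = 1"
    using assms(3,4) block_le[of n u] block_le[of n v] unfolding canon_adjacent_def by linarith
  then show ?thesis
  proof
    assume "block n u = 1"
    then show ?thesis using assms edge[of u v] unfolding canon_adjacent_def by simp
  next
    assume "block n v = 1"
    then have "{g v, g u} \<in> E" using assms edge[of v u] unfolding canon_adjacent_def by simp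
    then show ?thesis by (simp add: insert_commute)
  qed
qed

text \<open>\<open>E\<close> need not contain the edges inside \<open>A\<close>, \<open>B\<close> and \<open>C\<close>, hence the hypothesis on the one
  such edge of \<open>S\<close>; the two cross edges are supplied by \<open>cross_edge\<close>.\<close>

lemma triangle_of_canon_triangle:
  assumes S: "canon_triangle n m k S"
    and uv: "u \<in> set S" "v \<in> set S" "u \<noteq> v" "block n u = block n v" "{g u, g v} \<in> E"
  shows "g ` set S \<in> triangles E"
proof -
  have card_S: "card (set S) = 3" using S unfolding canon_triangle_def by (simp add: distinct_card)
  then have "card (set S - {u, v}) = 1" using uv by (simp add: card_Diff_subset)
  then obtain z where z: "z \<in> set S" "z \<noteq> u" "z \<noteq> v"
    by (metis Diff_iff card_1_singletonE insertCI)
  have S_eq: "set S = {u, v, z}"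
  proof (rule sym, rule card_subset_eq)
    show "card {u, v, z} = card (set S)" using z uv card_S by simp
  qed (use z uv in auto)
  have "block n z \<noteq> block n u"
  proof
    assume "block n z = block n u"
    then have "block n ` set S = {block n u}" using S_eq uv by auto
    then show False using S unfolding canon_triangle_def by simp
  qed
  moreover have "\<forall>x\<in>set S. x < n + m + 2" "\<forall>x\<in>set S. \<forall>y\<in>set S. canon_adjacent n k x y"
    using S unfolding canon_triangle_def by auto
  ultimately have "{g u, g z} \<in> E" "{g v, g z} \<in> E"
    using cross_edge[of u z] cross_edge[of v z] uv S_eq by simp_all
  moreover have "g u \<noteq> g v" "g u \<noteq> g z" "g v \<noteq> g z"
    using inj_onD[OF g_inj] z uv \<open>\<forall>x\<in>set S. x < n + m + 2\<close> by blast+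
  ultimately show ?thesis
    using uv(5) S_eq by (simp add: triangleI)
qed

context
  fixes L :: "(nat list \<times> nat) list"
  assumes cert: "packing_certificate n m k L"
begin

lemma certificate_triangle: "(S, q) \<in> set L \<Longrightarrow> canon_triangle n m k S"
  using cert unfolding packing_certificate_def by blast

lemma certificate_load:
  assumes "u < n + m + 2" "v < n + m + 2" "u \<noteq> v"
  shows "pair_load L u v \<le> 4"
    and "block n u = block n v \<Longrightarrow> pair_load L u v = (if block n u = 1 then 4 else 2)"
  using cert assms unfolding packing_certificate_def by blast+

lemma edge_weight_certificate:
  assumes "u < n + m + 2" "v < n + m + 2"
  shows "edge_weight E (certificate_weight g L) {g u, g v} =
    (\<Sum>p\<leftarrow>L. if g ` set (fst p) \<in> triangles E \<and> u \<in> set (fst p) \<and> v \<in> set (fst p)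
      then real (snd p) / 4 else 0)"
proof -
  have "{g u, g v} \<subseteq> g ` set (fst p) \<longleftrightarrow> u \<in> set (fst p) \<and> v \<in> set (fst p)"
    if "p \<in> set L" for p
  proof -
    have "set (fst p) \<subseteq> {..<n + m + 2}"
      using certificate_triangle[of "fst p" "snd p"] that unfolding canon_triangle_def by auto
    then show ?thesis using inj_on_image_mem_iff[OF g_inj] assms by auto
  qed
  then show ?thesis
    unfolding certificate_weight_def edge_weight_sum_list[OF finite_triangles[OF graph]]
    by (intro arg_cong[where f = sum_list] map_cong) simp_all
qed

lemma certificate_weight_nonneg: "0 \<le> certificate_weight g L T"
  unfolding certificate_weight_def by (intro sum_list_nonneg) auto

lemma certificate_edge_weight_le_one:
  assumes "e \<in> E"
  shows "edge_weight E (certificate_weight g L) e \<le> 1"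
proof -
  obtain u v where uv: "u < n + m + 2" "v < n + m + 2" "u \<noteq> v" "e = {g u, g v}"
    using edge_labelled[OF assms] .
  have "edge_weight E (certificate_weight g L) e \<le>
      (\<Sum>p\<leftarrow>L. if u \<in> set (fst p) \<and> v \<in> set (fst p) then real (snd p) / 4 else 0)"
    unfolding uv(4) edge_weight_certificate[OF uv(1,2)] by (intro sum_list_mono) auto
  also have "\<dots> = real (pair_load L u v) / 4"
    by (rule pair_load_real[symmetric])
  also have "\<dots> \<le> 1"
    using certificate_load(1)[OF uv(1-3)] by simp
  finally show ?thesis .
qed

lemma certificate_edge_weight_same_block:
  assumes uv: "u < n + m + 2" "v < n + m + 2" "u \<noteq> v" "block n u = block n v" "{g u, g v} \<in> E"
  shows "edge_weight E (certificate_weight g L) {g u, g v} = real (pair_load L u v) / 4"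
proof -
  have "g ` set (fst p) \<in> triangles E"
    if "p \<in> set L" "u \<in> set (fst p)" "v \<in> set (fst p)" for p
    using triangle_of_canon_triangle[OF certificate_triangle[of "fst p" "snd p"]] that uv by simp
  then show ?thesis
    unfolding edge_weight_certificate[OF uv(1,2)] pair_load_real
    by (intro arg_cong[where f = sum_list] map_cong) auto
qed

lemma certificate_support_meets_two_parts:
  assumes "0 < certificate_weight g L T"
  shows "card {X \<in> {A, B, C}. T \<inter> X \<noteq> {}} = 2"
proof -
  have "\<exists>p\<in>set L. T = g ` set (fst p)"
  proof (rule ccontr)
    assume "\<not> ?thesis"
    then have "map (\<lambda>p. if T = g ` set (fst p) then real (snd p) / 4 else 0) L = map (\<lambda>p. 0) L"
      by (intro map_cong) auto
    then have "certificate_weight g L T = 0"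
      unfolding certificate_weight_def by (simp del: map_eq_conv)
    with assms show False by simp
  qed
  then obtain p where p: "p \<in> set L" "T = g ` set (fst p)" by blast
  have "canon_triangle n m k (fst p)"
    using certificate_triangle[of "fst p" "snd p"] p(1) by simp
  then show ?thesis
    using card_parts_met[of "set (fst p)"] p(2) unfolding canon_triangle_def by auto
qed

lemma certificate_weight_le_one:
  assumes "T \<in> triangles E"
  shows "certificate_weight g L T \<le> 1"
proof -
  obtain x y where xy: "x \<in> T" "y \<in> T" "x \<noteq> y"
    using assms unfolding triangles_def by (auto simp: card_3_iff)
  have "certificate_weight g L T \<le> edge_weight E (certificate_weight g L) {x, y}"
    using finite_triangles[OF graph] certificate_weight_nonneg assms xy
    by (intro weight_le_edge_weight) auto
  also have "\<dots> \<le> 1"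
    using certificate_edge_weight_le_one triangle_edge[OF assms xy] by blast
  finally show ?thesis .
qed

lemma packing_from_certificate:
  "\<exists>\<omega>. fractional_triangle_packing E \<omega> \<and>
     (\<forall>T\<in>triangles E. \<omega> T > 0 \<longrightarrow> card {X\<in>{A, B, C}. T \<inter> X \<noteq> {}} = 2) \<and>
     (\<forall>e\<in>E. (e \<subseteq> A \<or> e \<subseteq> C) \<longrightarrow> edge_weight E \<omega> e = 1/2) \<and>
     (\<forall>e\<in>E. e \<subseteq> B \<longrightarrow> edge_weight E \<omega> e = 1)"
proof (intro exI conjI ballI impI)
  show "fractional_triangle_packing E (certificate_weight g L)"
    unfolding fractional_triangle_packing_def
    using certificate_weight_nonneg certificate_weight_le_one certificate_edge_weight_le_one by blast
next
  fix T assume "0 < certificate_weight g L T"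
  then show "card {X\<in>{A, B, C}. T \<inter> X \<noteq> {}} = 2"
    by (rule certificate_support_meets_two_parts)
next
  fix e assume "e \<in> E" "e \<subseteq> A \<or> e \<subseteq> C"
  moreover obtain u v where uv: "u < n + m + 2" "v < n + m + 2" "u \<noteq> v" "e = {g u, g v}"
    using edge_labelled[OF \<open>e \<in> E\<close>] .
  ultimately have "block n u = block n v" "block n u \<noteq> 1"
    using in_A_iff in_C_iff by auto
  then show "edge_weight E (certificate_weight g L) e = 1/2"
    using certificate_edge_weight_same_block[OF uv(1-3)] certificate_load(2)[OF uv(1-3)]
      \<open>e \<in> E\<close> uv(4) by simp
next
  fix e assume "e \<in> E" "e \<subseteq> B"
  moreover obtain u v where uv: "u < n + m + 2" "v < n + m + 2" "u \<noteq> v" "e = {g u, g v}"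
    using edge_labelled[OF \<open>e \<in> E\<close>] .
  ultimately have "block n u = 1" "block n v = 1"
    using in_B_iff by auto
  then show "edge_weight E (certificate_weight g L) e = 1"
    using certificate_edge_weight_same_block[OF uv(1-3)] certificate_load(2)[OF uv(1-3)]
      \<open>e \<in> E\<close> uv(4) by simp
qed

end

end

theorem proposition7p3:
  fixes A B C :: "'a set" and E :: "'a set set" and M :: "'a set set"
  assumes graph: "simple_graph (A \<union> B \<union> C) E"
    and disj: "A \<inter> B = {}" "A \<inter> C = {}" "B \<inter> C = {}"
    and cardA: "card A = 2"
    and cardB: "card B \<in> {3, 4}"
    and cardC: "card C \<in> {3, 4}"
    and M_pairs: "\<forall>e\<in>M. \<exists>b\<in>B. \<exists>x\<in>A \<union> C. e = {b, x}"
    and M_matching: "\<forall>e\<in>M. \<forall>f\<in>M. e \<noteq> f \<longrightarrow> e \<inter> f = {}"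
    and bip: "\<forall>b\<in>B. \<forall>x\<in>A \<union> C. ({b, x} \<in> E \<longleftrightarrow> {b, x} \<notin> M)"
    and M_BC: "card {e\<in>M. e \<inter> C \<noteq> {}} \<le> 2"
    and noAC: "\<forall>a\<in>A. \<forall>c\<in>C. {a, c} \<notin> E"
  shows "\<exists>\<omega>. fractional_triangle_packing E \<omega> \<and>
           (\<forall>T\<in>triangles E. \<omega> T > 0 \<longrightarrow> card {X\<in>{A, B, C}. T \<inter> X \<noteq> {}} = 2) \<and>
           (\<forall>e\<in>E. (e \<subseteq> A \<or> e \<subseteq> C) \<longrightarrow> edge_weight E \<omega> e = 1/2) \<and>
           (\<forall>e\<in>E. e \<subseteq> B \<longrightarrow> edge_weight E \<omega> e = 1)"
proof -
  have fin: "finite A" "finite B" "finite C"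
    using graph unfolding simple_graph_def by auto
  have card_bounds: "card B \<le> 4" "2 \<le> card C" using cardB cardC by auto
  obtain B1 h1 h2 where split: "B1 \<subseteq> B" "card B \<le> card B1 + 2"
    "inj_on h1 B1" "h1 ` B1 \<subseteq> A" "inj_on h2 (B - B1)" "h2 ` (B - B1) \<subseteq> C"
    "\<forall>b\<in>B1. \<forall>x\<in>A \<union> C. {b, x} \<in> M \<longrightarrow> x = h1 b"
    "\<forall>b\<in>B - B1. \<forall>x\<in>A \<union> C. {b, x} \<in> M \<longrightarrow> x = h2 b"
    using matching_split[OF fin disj cardA card_bounds M_pairs M_matching M_BC] .
  obtain g where "canonical_labelling A B C M (card B) (card C) (card B1) g"
    using canonical_labelling_of_split[OF fin disj cardA refl refl split(1,3-)] .
  then interpret labelled_graph A B C M "card B" "card C" "card B1" g E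
    using graph bip by (simp add: labelled_graph_def labelled_graph_axioms_def)
  have "card B1 \<le> 2"
    using card_inj_on_le[OF split(3,4) fin(1)] cardA by simp
  then obtain L where "packing_certificate (card B) (card C) (card B1) L"
    using packing_certificate_exists[OF cardB cardC _ split(2)] by blast
  then show ?thesis by (rule packing_from_certificate)
qed

end
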